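(* Let $r$ be a positive integer and suppose $1/(r+1)<\vartheta<1$. Let $(Z_t)$ be the random walk of the context with $c=1$, and let $\varrho\in(0,1)$ be the unique solution in $[0,1)$ of $\varrho=(1-\vartheta)+\vartheta\varrho^{r+1}$. Let $\varphi(z):=\mathbb{E}[z^{\tau(1)}\mathbf{1}\{\tau(1)<\infty\}]$ for $z\in[-1,1]$; it satisfies $\varphi(z)=z(1-\vartheta)+z\vartheta\varphi(z)^{r+1}$. Then for all $u\in\mathbb{N}$, $$\mathbb{E}[\tau(u)\mid\tau(u)<\infty]=u\,\frac{\varphi'(1)}{\varrho}=\frac{u\varrho}{(1-\vartheta)(r+1)-r\varrho},$$ where $\varphi'(1)$ is the derivative from below. In particular, for the single-agent trust model with prior parameters $\alpha,\beta\in\mathbb{N}$ and $c=1$, the expected quitting time conditional on quitting is $q(\alpha,\beta,1,r,\vartheta)=\mathbb{E}[\tau(u_{\rm crit})\mid\tau(u_{\rm crit})<\infty]$ with $u_{\rm crit}=r\alpha-\beta+1$.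
   Context: Random walk: for $\vartheta\in(0,1)$ and positive integers $c,r$, let $Z_0=0$ and $Z_t=Z_{t-1}+\Delta_t$ with $\Delta_t$ i.i.d., $\Delta_t=+c$ with probability $1-\vartheta$ and $-r$ with probability $\vartheta$. Define $\tau(u):=\inf\{t\in\mathbb{N}_0: Z_t\ge u\}$. Single-agent trust model: $(X_t)$ i.i.d. Bernoulli$(\vartheta)$; $\hat S_t=\sum_{s\le t}X_s\mathbf{1}_{\{A_s=1\}}$, $\hat F_t=\sum_{s\le t}(1-X_s)\mathbf{1}_{\{A_s=1\}}$, $\hat\vartheta_t=\frac{\alpha+\hat S_t}{\alpha+\beta+\hat S_t+\hat F_t}$; $A_t=1$ iff $r\hat\vartheta_n-c(1-\hat\vartheta_n)\ge0$ for all $n\le t-1$; $\tau:=\inf\{t: r\hat\vartheta_t-c(1-\hat\vartheta_t)<0\}$ (the first $t$ with $c\hat F_t-r\hat S_t\ge r\alpha-c\beta+1$); $q(\alpha,\beta,c,r,\vartheta):=\mathbb{E}[\tau\mid\tau<\infty]$. *)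

theory Defs
  imports "HOL-Probability.Probability"
begin

text \<open>Path space: an i.i.d. sequence of Bernoulli(theta) coins; coin s (0-based) is the
  (s+1)-th draw. True = "failure step -r" in the walk, True = "X = 1" in the trust model.\<close>
definition bern_paths :: "real \<Rightarrow> bool stream measure" where
  "bern_paths \<theta> = stream_space (measure_pmf (bernoulli_pmf \<theta>))"

definition walk_step :: "nat \<Rightarrow> nat \<Rightarrow> bool \<Rightarrow> int" where
  "walk_step c r b = (if b then - int r else int c)"

definition walk :: "nat \<Rightarrow> nat \<Rightarrow> bool stream \<Rightarrow> nat \<Rightarrow> int" where
  "walk c r \<omega> t = (\<Sum>s<t. walk_step c r (\<omega> !! s))"

definition hit_time :: "nat \<Rightarrow> nat \<Rightarrow> int \<Rightarrow> bool stream \<Rightarrow> enat" where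
  "hit_time c r u \<omega> =
     (if \<exists>t. walk c r \<omega> t \<ge> u then enat (LEAST t. walk c r \<omega> t \<ge> u) else \<infinity>)"

definition cond_mean :: "'a measure \<Rightarrow> ('a \<Rightarrow> enat) \<Rightarrow> real" where
  "cond_mean M T =
     (\<integral>\<omega>. (if T \<omega> < \<infinity> then real (the_enat (T \<omega>)) else 0) \<partial>M)
       / measure M {\<omega> \<in> space M. T \<omega> < \<infinity>}"

definition gen_fun :: "nat \<Rightarrow> real \<Rightarrow> real \<Rightarrow> real" where
  "gen_fun r \<theta> z =
     (\<integral>\<omega>. (if hit_time 1 r 1 \<omega> < \<infinity> then z ^ the_enat (hit_time 1 r 1 \<omega>) else 0)
        \<partial>bern_paths \<theta>)"

definition theta_hat :: "nat \<Rightarrow> nat \<Rightarrow> nat \<Rightarrow> nat \<Rightarrow> real" where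
  "theta_hat \<alpha> \<beta> S F = (real \<alpha> + real S) / (real \<alpha> + real \<beta> + real S + real F)"

definition trust_ok :: "nat \<Rightarrow> nat \<Rightarrow> nat \<Rightarrow> nat \<Rightarrow> nat \<Rightarrow> nat \<Rightarrow> bool" where
  "trust_ok \<alpha> \<beta> c r S F =
     (real r * theta_hat \<alpha> \<beta> S F - real c * (1 - theta_hat \<alpha> \<beta> S F) \<ge> 0)"

text \<open>trust_state ... t = (S_t, F_t, ok_t) where ok_t holds iff the trust condition held
  for all n <= t, i.e. ok_t = (A_{t+1} = 1).  X_{t+1} = omega !! t.\<close>
fun trust_state :: "nat \<Rightarrow> nat \<Rightarrow> nat \<Rightarrow> nat \<Rightarrow> bool stream \<Rightarrow> nat \<Rightarrow> nat \<times> nat \<times> bool" where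
  "trust_state \<alpha> \<beta> c r \<omega> 0 = (0, 0, trust_ok \<alpha> \<beta> c r 0 0)"
| "trust_state \<alpha> \<beta> c r \<omega> (Suc t) =
     (case trust_state \<alpha> \<beta> c r \<omega> t of (S, F, ok) \<Rightarrow>
        let S' = (if ok \<and> \<omega> !! t then Suc S else S);
            F' = (if ok \<and> \<not> \<omega> !! t then Suc F else F)
        in (S', F', ok \<and> trust_ok \<alpha> \<beta> c r S' F'))"

definition S_hat :: "nat \<Rightarrow> nat \<Rightarrow> nat \<Rightarrow> nat \<Rightarrow> bool stream \<Rightarrow> nat \<Rightarrow> nat" where
  "S_hat \<alpha> \<beta> c r \<omega> t = fst (trust_state \<alpha> \<beta> c r \<omega> t)"

definition F_hat :: "nat \<Rightarrow> nat \<Rightarrow> nat \<Rightarrow> nat \<Rightarrow> bool stream \<Rightarrow> nat \<Rightarrow> nat" where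
  "F_hat \<alpha> \<beta> c r \<omega> t = fst (snd (trust_state \<alpha> \<beta> c r \<omega> t))"

definition trust_tau :: "nat \<Rightarrow> nat \<Rightarrow> nat \<Rightarrow> nat \<Rightarrow> bool stream \<Rightarrow> enat" where
  "trust_tau \<alpha> \<beta> c r \<omega> =
     (if \<exists>t. \<not> trust_ok \<alpha> \<beta> c r (S_hat \<alpha> \<beta> c r \<omega> t) (F_hat \<alpha> \<beta> c r \<omega> t)
      then enat (LEAST t. \<not> trust_ok \<alpha> \<beta> c r (S_hat \<alpha> \<beta> c r \<omega> t) (F_hat \<alpha> \<beta> c r \<omega> t))
      else \<infinity>)"

definition q :: "nat \<Rightarrow> nat \<Rightarrow> nat \<Rightarrow> nat \<Rightarrow> real \<Rightarrow> real" where
  "q \<alpha> \<beta> c r \<theta> = cond_mean (bern_paths \<theta>) (trust_tau \<alpha> \<beta> c r)"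

end

theory Submission
  imports Defs
begin

text \<open>With \<open>c = 1\<close> the walk climbs one unit at a time, so to reach level \<open>u + v\<close> it must first
  reach \<open>u\<close> and then climb \<open>v\<close> more: the law of \<open>\<tau>(u)\<close> is the \<open>u\<close>-fold convolution power of
  that of \<open>\<tau>(1)\<close>. Hence \<open>P(\<tau>(u) < \<infinity>) = a ^ u\<close> and \<open>E[\<tau>(u); \<tau>(u) < \<infinity>] = u a ^ (u - 1) m\<close>, and a
  first-step analysis gives \<open>a = (1 - \<theta>) + \<theta> a ^ (r + 1)\<close> and \<open>m = a + \<theta> E[\<tau>(r + 1); \<tau>(r + 1) < \<infinity>]\<close>.
  Induction on the horizon bounds the partial sums by \<open>\<rho> ^ u\<close> and \<open>u \<rho> ^ u / (1 - \<theta> (r + 1) \<rho> ^ r)\<close>;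
  in particular \<open>a \<le> \<rho>\<close>, and since the fixed-point map has slope \<open>\<theta> (r + 1) \<rho> ^ r < 1\<close> below \<open>\<rho>\<close>,
  \<open>a = \<rho>\<close> and \<open>m = \<rho> / (1 - \<theta> (r + 1) \<rho> ^ r)\<close>. The left derivative \<open>\<phi>'(1)\<close> equals \<open>m\<close> by an
  Abel-type argument. In the trust model \<open>c F\<^sub>t - r S\<^sub>t\<close> is exactly the walk until the agent quits,
  so quitting is hitting level \<open>r \<alpha> - c \<beta> + 1\<close>.\<close>

section \<open>First-passage times of the walk\<close>

definition first_time :: "(nat \<Rightarrow> bool) \<Rightarrow> enat" where
  "first_time P = (if \<exists>t. P t then enat (LEAST t. P t) else \<infinity>)"

lemma first_time_eq_enat_iff: "first_time P = enat n \<longleftrightarrow> P n \<and> (\<forall>t<n. \<not> P t)"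
proof
  assume "first_time P = enat n"
  then have "\<exists>t. P t" and "n = (LEAST t. P t)"
    by (auto simp: first_time_def split: if_splits)
  then show "P n \<and> (\<forall>t<n. \<not> P t)"
    using LeastI_ex not_less_Least by blast
next
  assume first: "P n \<and> (\<forall>t<n. \<not> P t)"
  then have "(LEAST t. P t) = n"
    by (intro Least_equality) (auto simp: not_less[symmetric])
  with first show "first_time P = enat n"
    by (auto simp: first_time_def)
qed

lemma first_time_cong:
  assumes agree: "\<And>n. \<forall>t<n. \<not> Q t \<Longrightarrow> P n \<longleftrightarrow> Q n"
  shows "first_time P = first_time Q"
proof -
  have prefix: "(\<forall>t<n. \<not> P t) \<longleftrightarrow> (\<forall>t<n. \<not> Q t)" for n
  proof (induction n)
    case (Suc n)
    then show ?case
      unfolding All_less_Suc using agree[of n] by blast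
  qed simp
  have same_value: "first_time P = enat n \<longleftrightarrow> first_time Q = enat n" for n
    unfolding first_time_eq_enat_iff using prefix[of n] agree[of n] by blast
  show ?thesis
  proof (cases "first_time Q")
    case infinity
    then show ?thesis
      using same_value by (cases "first_time P") auto
  qed (use same_value in simp)
qed

lemma walk_0 [simp]: "walk c r \<omega> 0 = 0"
  by (simp add: walk_def)

lemma walk_Suc: "walk c r \<omega> (Suc t) = walk c r \<omega> t + walk_step c r (\<omega> !! t)"
  by (simp add: walk_def)

lemma walk_scons_Suc: "walk c r (x ## \<omega>) (Suc t) = walk_step c r x + walk c r \<omega> t"
  unfolding walk_def sum.lessThan_Suc_shift by simp

lemma walk_eq_stake: "walk c r \<omega> t = sum_list (map (walk_step c r) (stake t \<omega>))"
proof (induction t arbitrary: \<omega>)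
  case (Suc t)
  then show ?case
    using walk_scons_Suc[of c r "shd \<omega>" "stl \<omega>" t] by simp
qed simp

lemma hit_time_eq_first_time: "hit_time c r u \<omega> = first_time (\<lambda>t. u \<le> walk c r \<omega> t)"
  by (simp add: hit_time_def first_time_def)

lemma hit_time_eq_enat_iff:
  "hit_time c r u \<omega> = enat n \<longleftrightarrow> u \<le> walk c r \<omega> n \<and> (\<forall>t<n. walk c r \<omega> t < u)"
  by (simp add: hit_time_eq_first_time first_time_eq_enat_iff not_le)

lemma hit_time_eq_0_iff: "hit_time c r u \<omega> = enat 0 \<longleftrightarrow> u \<le> 0"
  by (simp add: hit_time_eq_enat_iff)

lemma hit_time_scons_Suc_iff:
  assumes "0 < u"
  shows "hit_time c r u (x ## \<omega>) = enat (Suc n) \<longleftrightarrow> hit_time c r (u - walk_step c r x) \<omega> = enat n"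
  using assms by (auto simp: hit_time_eq_enat_iff walk_scons_Suc All_less_Suc2)

lemma hit_time_scons_Suc_iff_nat:
  "hit_time 1 r (int u) (x ## \<omega>) = enat (Suc n) \<longleftrightarrow>
     u \<noteq> 0 \<and> hit_time 1 r (int (if x then u + r else u - 1)) \<omega> = enat n"
proof (cases "u = 0")
  case True
  then show ?thesis
    using hit_time_eq_0_iff[of 1 r 0 "x ## \<omega>"] by auto
next
  case False
  then show ?thesis
    using hit_time_scons_Suc_iff[of "int u" 1 r x \<omega> n] by (simp add: walk_step_def of_nat_diff)
qed

section \<open>The law of the hitting time\<close>

lemma space_bern_paths [simp]: "space (bern_paths \<theta>) = UNIV"
  by (simp add: bern_paths_def space_stream_space)

lemma sets_bern_paths: "sets (bern_paths \<theta>) = sets (stream_space (count_space UNIV))"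
  unfolding bern_paths_def by (rule sets_stream_space_cong) simp

lemma prob_space_bern_paths: "prob_space (bern_paths \<theta>)"
  unfolding bern_paths_def by (rule prob_space.prob_space_stream_space[OF prob_space_measure_pmf])

lemma measurable_walk [measurable]:
  "(\<lambda>\<omega>. walk c r \<omega> t) \<in> bern_paths \<theta> \<rightarrow>\<^sub>M count_space UNIV"
  unfolding walk_eq_stake measurable_cong_sets[OF sets_bern_paths refl]
  by (rule measurable_compose[OF measurable_stake]) simp

lemma measurable_hit_time [measurable]: "hit_time c r u \<in> bern_paths \<theta> \<rightarrow>\<^sub>M count_space UNIV"
  unfolding hit_time_def by measurable

lemma emeasure_bern_paths_scons:
  assumes "0 \<le> \<theta>" "\<theta> \<le> 1" and [measurable]: "X \<in> sets (bern_paths \<theta>)"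
  shows "emeasure (bern_paths \<theta>) X =
    emeasure (bern_paths \<theta>) {\<omega>. True ## \<omega> \<in> X} * \<theta> +
    emeasure (bern_paths \<theta>) {\<omega>. False ## \<omega> \<in> X} * (1 - \<theta>)"
  using assms(1,2) unfolding bern_paths_def
  by (subst prob_space.emeasure_stream_space[OF prob_space_measure_pmf])
     (simp_all add: space_stream_space bern_paths_def[symmetric])

fun hit_prob :: "nat \<Rightarrow> real \<Rightarrow> nat \<Rightarrow> nat \<Rightarrow> real" where
  "hit_prob r \<theta> 0 u = (if u = 0 then 1 else 0)"
| "hit_prob r \<theta> (Suc n) u =
     (if u = 0 then 0 else (1 - \<theta>) * hit_prob r \<theta> n (u - 1) + \<theta> * hit_prob r \<theta> n (u + r))"

lemma hit_prob_nonneg: "0 \<le> \<theta> \<Longrightarrow> \<theta> \<le> 1 \<Longrightarrow> 0 \<le> hit_prob r \<theta> n u"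
  by (induction n arbitrary: u) auto

lemma hit_prob_level_0: "hit_prob r \<theta> n 0 = (if n = 0 then 1 else 0)"
  by (cases n) auto

lemma emeasure_hit_time_eq_hit_prob:
  assumes \<theta>: "0 \<le> \<theta>" "\<theta> \<le> 1"
  shows "emeasure (bern_paths \<theta>) {\<omega>. hit_time 1 r (int u) \<omega> = enat n} = ennreal (hit_prob r \<theta> n u)"
proof (induction n arbitrary: u)
  case 0
  interpret prob_space "bern_paths \<theta>"
    by (rule prob_space_bern_paths)
  show ?case
    using emeasure_space_1 by (simp add: hit_time_eq_0_iff)
next
  case (Suc n)
  show ?case
  proof (cases "u = 0")
    case True
    have "hit_time 1 r 0 \<omega> = enat 0" for \<omega>
      by (simp add: hit_time_eq_0_iff)
    with True show ?thesis
      by simp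
  next
    case False
    let ?X = "{\<omega>. hit_time 1 r (int u) \<omega> = enat (Suc n)}"
    have step: "{\<omega>. x ## \<omega> \<in> ?X} = {\<omega>. hit_time 1 r (int (if x then u + r else u - 1)) \<omega> = enat n}" for x
      using False by (simp only: mem_Collect_eq hit_time_scons_Suc_iff_nat) simp
    have "Measurable.pred (bern_paths \<theta>) (\<lambda>\<omega>. hit_time 1 r (int u) \<omega> = enat (Suc n))"
      by measurable
    then have "?X \<in> sets (bern_paths \<theta>)"
      by (simp add: pred_def)
    then have "emeasure (bern_paths \<theta>) ?X =
        ennreal (hit_prob r \<theta> n (u + r)) * \<theta> + ennreal (hit_prob r \<theta> n (u - 1)) * (1 - \<theta>)"
      by (simp only: emeasure_bern_paths_scons[OF \<theta>] step Suc.IH if_True if_False)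
    also have "\<dots> = ennreal (hit_prob r \<theta> n (u + r) * \<theta> + hit_prob r \<theta> n (u - 1) * (1 - \<theta>))"
      using \<theta> by (simp add: ennreal_plus ennreal_mult hit_prob_nonneg)
    also have "\<dots> = ennreal (hit_prob r \<theta> (Suc n) u)"
      using False by (simp add: ac_simps)
    finally show ?thesis .
  qed
qed

lemma nn_integral_enat_valued:
  fixes T :: "'a \<Rightarrow> enat" and g p :: "nat \<Rightarrow> real"
  assumes [measurable]: "T \<in> M \<rightarrow>\<^sub>M count_space UNIV"
    and law: "\<And>n. emeasure M {\<omega> \<in> space M. T \<omega> = enat n} = ennreal (p n)"
    and g: "\<And>n. 0 \<le> g n" and p: "\<And>n. 0 \<le> p n"
    and summable: "summable (\<lambda>n. g n * p n)"
  shows "(\<integral>\<^sup>+\<omega>. ennreal (if T \<omega> < \<infinity> then g (the_enat (T \<omega>)) else 0) \<partial>M) = ennreal (\<Sum>n. g n * p n)"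
proof -
  let ?A = "\<lambda>n. {\<omega> \<in> space M. T \<omega> = enat n}"
  have pointwise: "ennreal (if T \<omega> < \<infinity> then g (the_enat (T \<omega>)) else 0) =
      (\<Sum>n. ennreal (g n) * indicator (?A n) \<omega>)" if "\<omega> \<in> space M" for \<omega>
  proof (cases "T \<omega>")
    case (enat m)
    have "(\<lambda>n. ennreal (g n) * indicator (?A n) \<omega>) = (\<lambda>n. if n = m then ennreal (g n) else 0)"
      using enat that by (auto simp: indicator_def)
    then show ?thesis
      using enat sums_single[of m "\<lambda>n. ennreal (g n)"] sums_unique by fastforce
  qed simp
  have "(\<integral>\<^sup>+\<omega>. ennreal (if T \<omega> < \<infinity> then g (the_enat (T \<omega>)) else 0) \<partial>M)
      = (\<integral>\<^sup>+\<omega>. (\<Sum>n. ennreal (g n) * indicator (?A n) \<omega>) \<partial>M)"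
    by (rule nn_integral_cong) (rule pointwise)
  also have "\<dots> = (\<Sum>n. ennreal (g n) * emeasure M (?A n))"
    by (subst nn_integral_suminf) (simp_all add: nn_integral_cmult_indicator)
  also have "\<dots> = (\<Sum>n. ennreal (g n * p n))"
    using g by (simp add: law ennreal_mult'[symmetric])
  also have "\<dots> = ennreal (\<Sum>n. g n * p n)"
    using summable g p by (intro suminf_ennreal2) auto
  finally show ?thesis .
qed

lemma integral_enat_valued:
  fixes T :: "'a \<Rightarrow> enat" and g p :: "nat \<Rightarrow> real"
  assumes T: "T \<in> M \<rightarrow>\<^sub>M count_space UNIV"
    and law: "\<And>n. emeasure M {\<omega> \<in> space M. T \<omega> = enat n} = ennreal (p n)"
    and g: "\<And>n. 0 \<le> g n" and p: "\<And>n. 0 \<le> p n"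
    and summable: "summable (\<lambda>n. g n * p n)"
  shows "(\<integral>\<omega>. (if T \<omega> < \<infinity> then g (the_enat (T \<omega>)) else 0) \<partial>M) = (\<Sum>n. g n * p n)"
proof -
  have "(\<lambda>\<omega>. if T \<omega> < \<infinity> then g (the_enat (T \<omega>)) else 0) \<in> borel_measurable M"
    by (rule measurable_compose[OF T]) simp
  then show ?thesis
    using nn_integral_enat_valued[OF assms] suminf_nonneg[OF summable] g p
    by (subst integral_eq_nn_integral) auto
qed

lemma cond_mean_eq_suminf:
  fixes T :: "'a \<Rightarrow> enat" and p :: "nat \<Rightarrow> real"
  assumes [measurable]: "T \<in> M \<rightarrow>\<^sub>M count_space UNIV"
    and law: "\<And>n. emeasure M {\<omega> \<in> space M. T \<omega> = enat n} = ennreal (p n)"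
    and p: "\<And>n. 0 \<le> p n"
    and "summable p" "summable (\<lambda>n. real n * p n)"
  shows "cond_mean M T = (\<Sum>n. real n * p n) / (\<Sum>n. p n)"
proof -
  have "{\<omega> \<in> space M. T \<omega> < \<infinity>} \<in> sets M"
    by measurable
  then have "emeasure M {\<omega> \<in> space M. T \<omega> < \<infinity>} =
      (\<integral>\<^sup>+\<omega>. indicator {\<omega> \<in> space M. T \<omega> < \<infinity>} \<omega> \<partial>M)"
    by (rule nn_integral_indicator[symmetric])
  also have "\<dots> = (\<integral>\<^sup>+\<omega>. ennreal (if T \<omega> < \<infinity> then 1 else 0) \<partial>M)"
    by (rule nn_integral_cong) (simp add: indicator_def)
  also have "\<dots> = ennreal (\<Sum>n. p n)"
    using nn_integral_enat_valued[OF assms(1,2), of "\<lambda>_. 1"] p \<open>summable p\<close> by simp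
  finally have "measure M {\<omega> \<in> space M. T \<omega> < \<infinity>} = (\<Sum>n. p n)"
    using suminf_nonneg[OF \<open>summable p\<close> p] by (simp add: measure_def)
  then show ?thesis
    unfolding cond_mean_def using integral_enat_valued[OF assms(1,2) _ p assms(5)] by simp
qed

lemma gen_fun_eq_suminf:
  assumes \<theta>: "0 \<le> \<theta>" "\<theta> \<le> 1" and z: "0 \<le> z" "z \<le> 1"
    and summable: "summable (\<lambda>n. hit_prob r \<theta> n 1)"
  shows "gen_fun r \<theta> z = (\<Sum>n. z ^ n * hit_prob r \<theta> n 1)"
proof -
  have weighted: "summable (\<lambda>n. z ^ n * hit_prob r \<theta> n 1)"
    using z hit_prob_nonneg[OF \<theta>]
    by (intro summable_comparison_test[OF _ summable]) (auto intro!: mult_left_le_one_le power_le_one)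
  note law = emeasure_hit_time_eq_hit_prob[OF \<theta>, of r 1]
  have "gen_fun r \<theta> z = (\<integral>\<omega>. (if hit_time 1 r (int 1) \<omega> < \<infinity>
      then z ^ the_enat (hit_time 1 r (int 1) \<omega>) else 0) \<partial>bern_paths \<theta>)"
    by (simp only: gen_fun_def of_nat_1)
  also have "\<dots> = (\<Sum>n. z ^ n * hit_prob r \<theta> n 1)"
    by (rule integral_enat_valued[OF measurable_hit_time])
      (use law hit_prob_nonneg[OF \<theta>] z weighted in simp_all)
  finally show ?thesis .
qed

lemma cond_mean_hit_time_eq_suminf:
  assumes \<theta>: "0 \<le> \<theta>" "\<theta> \<le> 1"
    and "summable (\<lambda>n. hit_prob r \<theta> n u)" "summable (\<lambda>n. real n * hit_prob r \<theta> n u)"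
  shows "cond_mean (bern_paths \<theta>) (hit_time 1 r (int u)) =
    (\<Sum>n. real n * hit_prob r \<theta> n u) / (\<Sum>n. hit_prob r \<theta> n u)"
  using assms(3,4) hit_prob_nonneg[OF \<theta>] emeasure_hit_time_eq_hit_prob[OF \<theta>]
  by (intro cond_mean_eq_suminf[OF measurable_hit_time]) simp_all

section \<open>Solving for the law of the hitting time\<close>

lemma power_diff_le:
  fixes x y :: real
  assumes "0 \<le> x" "x \<le> y"
  shows "y ^ n - x ^ n \<le> real n * y ^ (n - 1) * (y - x)"
proof (induction n)
  case (Suc n)
  have "y ^ Suc n - x ^ Suc n = y * (y ^ n - x ^ n) + x ^ n * (y - x)"
    by (simp add: algebra_simps)
  also have "\<dots> \<le> y * (real n * y ^ (n - 1) * (y - x)) + y ^ n * (y - x)"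
    using assms Suc.IH by (intro add_mono mult_left_mono mult_right_mono power_mono) auto
  also have "y * (real n * y ^ (n - 1) * (y - x)) = real n * y ^ n * (y - x)"
    by (cases n) (auto simp: algebra_simps)
  finally show ?case
    by (simp add: algebra_simps)
qed simp

text \<open>The difference quotient at \<open>1\<close> is \<open>\<Sum>n. p n (1 + y + \<dots> + y ^ (n - 1))\<close>, which converges
  uniformly on \<open>[0, 1]\<close> by the M-test with majorant \<open>n p n\<close>.\<close>
lemma has_real_derivative_at_left_1_suminf:
  fixes f :: "real \<Rightarrow> real" and p :: "nat \<Rightarrow> real"
  assumes p: "\<And>n. 0 \<le> p n" and mean: "summable (\<lambda>n. real n * p n)"
    and f: "\<And>y. 0 \<le> y \<Longrightarrow> y \<le> 1 \<Longrightarrow> f y = (\<Sum>n. y ^ n * p n)"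
  shows "(f has_real_derivative (\<Sum>n. real n * p n)) (at_left 1)"
proof -
  have "summable (\<lambda>n. real (Suc n) * p (Suc n))"
    using mean summable_Suc_iff[of "\<lambda>n. real n * p n"] by simp
  then have "summable (\<lambda>n. p (Suc n))"
    by (rule summable_comparison_test') (simp add: algebra_simps p)
  then have mass: "summable p"
    by (simp only: summable_Suc_iff)
  define G where "G y = (\<Sum>n. p n * (\<Sum>k<n. y ^ k))" for y :: real
  have bound: "norm (p n * (\<Sum>k<n. y ^ k)) \<le> real n * p n" if "y \<in> {0..1}" for n y
  proof -
    have "0 \<le> (\<Sum>k<n. y ^ k)"
      using that by (auto intro!: sum_nonneg)
    moreover have "(\<Sum>k<n. y ^ k) \<le> (\<Sum>k<n. 1)"
      using that by (intro sum_mono power_le_one) auto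
    ultimately show ?thesis
      using p[of n] mult_left_mono[of "\<Sum>k<n. y ^ k" "real n" "p n"] by (simp add: mult.commute)
  qed
  have "uniform_limit {0..1} (\<lambda>N y. \<Sum>n<N. p n * (\<Sum>k<n. y ^ k)) G sequentially"
    unfolding G_def by (rule Weierstrass_m_test[OF bound mean])
  then have "continuous_on {0..1} G"
    by (rule uniform_limit_theorem[rotated]) (auto intro!: always_eventually continuous_intros)
  then have "(G \<longlongrightarrow> G 1) (at 1 within {0..1})"
    by (simp add: continuous_on_def)
  then have "(G \<longlongrightarrow> G 1) (at_left 1)"
    by (simp add: at_within_Icc_at_left)
  moreover have "G 1 = (\<Sum>n. real n * p n)"
    by (simp add: G_def mult.commute)
  moreover have "G y = (f y - f 1) / (y - 1)" if "0 < y" "y < 1" for y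
  proof -
    have "summable (\<lambda>n. y ^ n * p n)"
      using that p by (intro summable_comparison_test[OF _ mass]) (auto intro!: mult_left_le_one_le power_le_one)
    moreover have "summable (\<lambda>n. p n * (\<Sum>k<n. y ^ k))"
      using that bound by (intro summable_comparison_test[OF _ mean]) auto
    moreover have "y ^ n * p n - p n = (y - 1) * (p n * (\<Sum>k<n. y ^ k))" for n
    proof -
      have "y ^ n * p n - p n = (y ^ n - 1) * p n"
        by (simp add: algebra_simps)
      then show ?thesis
        by (simp only: power_diff_1_eq mult_ac)
    qed
    ultimately have "(\<Sum>n. y ^ n * p n) - (\<Sum>n. p n) = (y - 1) * G y"
      unfolding G_def using mass by (simp only: suminf_diff suminf_mult)
    then show ?thesis
      using that f[of y] f[of 1] by simp
  qed
  then have "\<forall>\<^sub>F y in at_left 1. G y = (f y - f 1) / (y - 1)"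
    using eventually_at_left_real[of 0 1] by (auto elim: eventually_mono)
  ultimately show ?thesis
    by (simp add: has_field_derivative_iff Lim_transform_eventually)
qed

text \<open>The strong Markov property at \<open>\<tau>(u)\<close>: upward steps have size one, so the walk passes
  through level \<open>u\<close> on its way to \<open>u + v\<close>.\<close>
lemma hit_prob_add_level:
  "hit_prob r \<theta> n (u + v) = (\<Sum>k\<le>n. hit_prob r \<theta> k u * hit_prob r \<theta> (n - k) v)"
proof (induction n arbitrary: u)
  case (Suc n)
  show ?case
  proof (cases u)
    case 0
    then show ?thesis
      unfolding sum.atMost_Suc_shift by (simp add: hit_prob_level_0)
  next
    case (Suc j)
    have "hit_prob r \<theta> (Suc n) (u + v) =
        (1 - \<theta>) * hit_prob r \<theta> n (j + v) + \<theta> * hit_prob r \<theta> n ((u + r) + v)"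
      using Suc by (simp add: algebra_simps)
    also have "\<dots> = (\<Sum>k\<le>n. ((1 - \<theta>) * hit_prob r \<theta> k j + \<theta> * hit_prob r \<theta> k (u + r)) *
        hit_prob r \<theta> (n - k) v)"
      by (simp only: Suc.IH sum_distrib_left distrib_right mult.assoc sum.distrib)
    also have "\<dots> = (\<Sum>k\<le>Suc n. hit_prob r \<theta> k u * hit_prob r \<theta> (Suc n - k) v)"
      unfolding sum.atMost_Suc_shift using Suc by simp
    finally show ?thesis .
  qed
qed simp

definition reach_prob :: "nat \<Rightarrow> real \<Rightarrow> nat \<Rightarrow> real" where
  "reach_prob r \<theta> u = (\<Sum>n. hit_prob r \<theta> n u)"

definition reach_moment :: "nat \<Rightarrow> real \<Rightarrow> nat \<Rightarrow> real" where
  "reach_moment r \<theta> u = (\<Sum>n. real n * hit_prob r \<theta> n u)"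

lemma reach_prob_0: "reach_prob r \<theta> 0 = 1"
proof -
  have "(\<lambda>n. hit_prob r \<theta> n 0) sums 1"
    using sums_single[of 0 "\<lambda>_. 1 :: real"] by (simp add: hit_prob_level_0)
  then show ?thesis
    by (simp add: reach_prob_def sums_iff)
qed

lemma reach_moment_0: "reach_moment r \<theta> 0 = 0"
proof -
  have "(\<lambda>n. real n * hit_prob r \<theta> n 0) = (\<lambda>_. 0)"
    by (simp add: fun_eq_iff hit_prob_level_0)
  then show ?thesis
    by (simp add: reach_moment_def)
qed

context
  fixes r :: nat and \<theta> \<rho> :: real
  assumes theta_lt_1: "\<theta> < 1" and rho: "0 \<le> \<rho>" "\<rho> < 1"
    and fixed_point: "\<rho> = (1 - \<theta>) + \<theta> * \<rho> ^ (r + 1)"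
begin

lemma theta_pos: "0 < \<theta>"
proof -
  have "\<rho> ^ (r + 1) < 1"
    using rho by (subst power_less_one_iff) auto
  moreover have "0 < \<theta> * (1 - \<rho> ^ (r + 1))"
    using fixed_point rho by (simp add: algebra_simps)
  ultimately show ?thesis
    by (simp add: zero_less_mult_iff)
qed

lemma r_pos: "0 < r"
proof (rule ccontr)
  assume "\<not> 0 < r"
  then have "(1 - \<theta>) * (1 - \<rho>) = 0"
    using fixed_point by (simp add: algebra_simps)
  then show False
    using theta_lt_1 rho by simp
qed

lemma rho_pos: "0 < \<rho>"
proof -
  have "0 \<le> \<theta> * \<rho> ^ (r + 1)"
    using theta_pos rho by simp
  then show ?thesis
    using fixed_point theta_lt_1 by linarith
qed

lemma theta_bounds: "0 \<le> \<theta>" "\<theta> \<le> 1"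
  using theta_pos theta_lt_1 by auto

text \<open>The left side is the slope of \<open>x \<mapsto> (1 - \<theta>) + \<theta> x ^ (r + 1)\<close> at \<open>\<rho>\<close>. Dividing the
  fixed-point equation by \<open>1 - \<rho>\<close> gives \<open>\<theta> (1 + \<rho> + \<dots> + \<rho> ^ r) = 1\<close>, and \<open>\<rho> ^ r < \<rho> ^ i\<close> for \<open>i < r\<close>.\<close>
lemma fixed_point_derivative_lt_1: "\<theta> * (real r + 1) * \<rho> ^ r < 1"
proof -
  define S where "S = (\<Sum>i<r + 1. \<rho> ^ i)"
  have "(1 - \<rho>) * (\<theta> * S - 1) = \<theta> * ((1 - \<rho>) * S) - (1 - \<rho>)"
    by (simp add: algebra_simps)
  also have "\<dots> = \<theta> * (1 - \<rho> ^ (r + 1)) - (1 - \<rho>)"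
    unfolding S_def one_diff_power_eq ..
  also have "\<dots> = 0"
    using fixed_point by (simp add: algebra_simps)
  finally have "\<theta> * S = 1"
    using rho by simp
  have "(\<Sum>i<r + 1. \<rho> ^ r) < S"
    unfolding S_def
  proof (rule sum_strict_mono_ex1)
    show "\<forall>i\<in>{..<r + 1}. \<rho> ^ r \<le> \<rho> ^ i"
      using rho by (auto intro!: power_decreasing)
    show "\<exists>i\<in>{..<r + 1}. \<rho> ^ r < \<rho> ^ i"
      using rho r_pos by (intro bexI[of _ 0]) (auto simp: power_less_one_iff)
  qed simp
  then have "\<theta> * ((real r + 1) * \<rho> ^ r) < \<theta> * S"
    using theta_pos by (simp add: add.commute)
  then show ?thesis
    using \<open>\<theta> * S = 1\<close> by (simp add: mult.assoc)
qed

lemma sum_hit_prob_le: "(\<Sum>n<N. hit_prob r \<theta> n u) \<le> \<rho> ^ u"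
proof (induction N arbitrary: u)
  case 0
  then show ?case
    using rho by simp
next
  case (Suc N)
  show ?case
  proof (cases u)
    case 0
    then show ?thesis
      by (simp add: sum.lessThan_Suc_shift hit_prob_level_0)
  next
    case (Suc k)
    have "(\<Sum>n<Suc N. hit_prob r \<theta> n u) =
        (1 - \<theta>) * (\<Sum>n<N. hit_prob r \<theta> n k) + \<theta> * (\<Sum>n<N. hit_prob r \<theta> n (u + r))"
      unfolding sum.lessThan_Suc_shift using Suc by (simp add: sum.distrib sum_distrib_left)
    also have "\<dots> \<le> (1 - \<theta>) * \<rho> ^ k + \<theta> * \<rho> ^ (u + r)"
      using Suc.IH theta_bounds by (intro add_mono mult_left_mono) auto
    also have "\<dots> = \<rho> ^ k * ((1 - \<theta>) + \<theta> * \<rho> ^ (r + 1))"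
      using Suc by (simp add: algebra_simps power_add)
    also have "\<dots> = \<rho> ^ u"
      using Suc fixed_point by simp
    finally show ?thesis .
  qed
qed

lemma sum_hit_moment_le:
  "(\<Sum>n<N. real n * hit_prob r \<theta> n u) \<le> real u * \<rho> ^ u / (1 - \<theta> * (real r + 1) * \<rho> ^ r)"
proof (induction N arbitrary: u)
  case 0
  then show ?case
    using rho fixed_point_derivative_lt_1 by simp
next
  case (Suc N)
  define d where "d = 1 - \<theta> * (real r + 1) * \<rho> ^ r"
  have "0 < d"
    using fixed_point_derivative_lt_1 by (simp add: d_def)
  show ?case
  proof (cases u)
    case 0
    then show ?thesis
      unfolding sum.lessThan_Suc_shift by (simp add: hit_prob_level_0)
  next
    case (Suc k)
    have "(\<Sum>n<Suc N. real n * hit_prob r \<theta> n u) = (\<Sum>n<N. real (Suc n) * hit_prob r \<theta> (Suc n) u)"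
      unfolding sum.lessThan_Suc_shift by simp
    also have "\<dots> = (\<Sum>n<N. hit_prob r \<theta> (Suc n) u + (1 - \<theta>) * (real n * hit_prob r \<theta> n k)
        + \<theta> * (real n * hit_prob r \<theta> n (u + r)))"
      by (intro sum.cong refl) (simp add: Suc algebra_simps)
    also have "\<dots> = (\<Sum>n<N. hit_prob r \<theta> (Suc n) u) + (1 - \<theta>) * (\<Sum>n<N. real n * hit_prob r \<theta> n k)
        + \<theta> * (\<Sum>n<N. real n * hit_prob r \<theta> n (u + r))"
      by (simp only: sum.distrib sum_distrib_left)
    also have "\<dots> \<le> \<rho> ^ u + (1 - \<theta>) * (real k * \<rho> ^ k / d) + \<theta> * (real (u + r) * \<rho> ^ (u + r) / d)"
    proof (intro add_mono mult_left_mono)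
      have "(\<Sum>n<N. hit_prob r \<theta> (Suc n) u) \<le> (\<Sum>n<Suc N. hit_prob r \<theta> n u)"
        unfolding sum.lessThan_Suc_shift using hit_prob_nonneg[OF theta_bounds] by simp
      then show "(\<Sum>n<N. hit_prob r \<theta> (Suc n) u) \<le> \<rho> ^ u"
        using sum_hit_prob_le by (rule order_trans)
    qed (use Suc.IH[of k] Suc.IH[of "u + r"] theta_bounds in \<open>simp_all add: d_def\<close>)
    also have "\<dots> = (\<rho> ^ u * d + (1 - \<theta>) * (real k * \<rho> ^ k) + \<theta> * (real (u + r) * \<rho> ^ (u + r))) / d"
      using \<open>0 < d\<close> by (simp add: field_simps)
    also have "\<dots> = real u * \<rho> ^ u / d"
    proof -
      have "\<rho> ^ u * d + (1 - \<theta>) * (real k * \<rho> ^ k) + \<theta> * (real (u + r) * \<rho> ^ (u + r))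
          = \<rho> ^ k * (\<rho> + real k * ((1 - \<theta>) + \<theta> * \<rho> ^ (r + 1)))"
        by (simp add: Suc d_def power_add algebra_simps)
      also have "\<dots> = real u * \<rho> ^ u"
        unfolding fixed_point[symmetric] by (simp add: Suc algebra_simps)
      finally show ?thesis
        by simp
    qed
    finally show ?thesis
      by (simp add: d_def)
  qed
qed

lemma summable_hit_prob: "summable (\<lambda>n. hit_prob r \<theta> n u)"
  by (rule summableI_nonneg_bounded[OF hit_prob_nonneg[OF theta_bounds] sum_hit_prob_le])

lemma summable_hit_moment: "summable (\<lambda>n. real n * hit_prob r \<theta> n u)"
  by (rule summableI_nonneg_bounded[OF _ sum_hit_moment_le]) (simp add: hit_prob_nonneg[OF theta_bounds])

lemma sums_reach_prob: "(\<lambda>n. hit_prob r \<theta> n u) sums reach_prob r \<theta> u"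
  unfolding reach_prob_def by (rule summable_sums[OF summable_hit_prob])

lemma sums_reach_moment: "(\<lambda>n. real n * hit_prob r \<theta> n u) sums reach_moment r \<theta> u"
  unfolding reach_moment_def by (rule summable_sums[OF summable_hit_moment])

lemma reach_prob_nonneg: "0 \<le> reach_prob r \<theta> u"
  unfolding reach_prob_def by (rule suminf_nonneg[OF summable_hit_prob hit_prob_nonneg[OF theta_bounds]])

lemma reach_prob_le: "reach_prob r \<theta> u \<le> \<rho> ^ u"
  unfolding reach_prob_def by (rule suminf_le_const[OF summable_hit_prob sum_hit_prob_le])

lemma reach_prob_add: "reach_prob r \<theta> (u + v) = reach_prob r \<theta> u * reach_prob r \<theta> v"
proof -
  have "(\<lambda>n. \<Sum>k\<le>n. hit_prob r \<theta> k u * hit_prob r \<theta> (n - k) v) sums (reach_prob r \<theta> u * reach_prob r \<theta> v)"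
    unfolding reach_prob_def
    by (rule Cauchy_product_sums) (simp_all add: summable_hit_prob hit_prob_nonneg[OF theta_bounds])
  then show ?thesis
    using sums_reach_prob[of "u + v"] sums_unique2 by (auto simp: hit_prob_add_level)
qed

lemma reach_moment_add:
  "reach_moment r \<theta> (u + v) = reach_moment r \<theta> u * reach_prob r \<theta> v + reach_prob r \<theta> u * reach_moment r \<theta> v"
proof -
  have "(\<lambda>n. \<Sum>k\<le>n. (real k * hit_prob r \<theta> k u) * hit_prob r \<theta> (n - k) v)
      sums (reach_moment r \<theta> u * reach_prob r \<theta> v)"
    unfolding reach_prob_def reach_moment_def
    by (rule Cauchy_product_sums) (simp_all add: summable_hit_prob summable_hit_moment hit_prob_nonneg[OF theta_bounds])
  moreover have "(\<lambda>n. \<Sum>k\<le>n. hit_prob r \<theta> k u * (real (n - k) * hit_prob r \<theta> (n - k) v))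
      sums (reach_prob r \<theta> u * reach_moment r \<theta> v)"
    unfolding reach_prob_def reach_moment_def
    by (rule Cauchy_product_sums) (simp_all add: summable_hit_prob summable_hit_moment hit_prob_nonneg[OF theta_bounds])
  ultimately have "(\<lambda>n. (\<Sum>k\<le>n. (real k * hit_prob r \<theta> k u) * hit_prob r \<theta> (n - k) v)
      + (\<Sum>k\<le>n. hit_prob r \<theta> k u * (real (n - k) * hit_prob r \<theta> (n - k) v)))
      sums (reach_moment r \<theta> u * reach_prob r \<theta> v + reach_prob r \<theta> u * reach_moment r \<theta> v)"
    by (rule sums_add)
  moreover have "(\<Sum>k\<le>n. (real k * hit_prob r \<theta> k u) * hit_prob r \<theta> (n - k) v)
      + (\<Sum>k\<le>n. hit_prob r \<theta> k u * (real (n - k) * hit_prob r \<theta> (n - k) v))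
      = real n * hit_prob r \<theta> n (u + v)" for n
  proof -
    have "(\<Sum>k\<le>n. (real k * hit_prob r \<theta> k u) * hit_prob r \<theta> (n - k) v)
        + (\<Sum>k\<le>n. hit_prob r \<theta> k u * (real (n - k) * hit_prob r \<theta> (n - k) v))
        = (\<Sum>k\<le>n. real n * (hit_prob r \<theta> k u * hit_prob r \<theta> (n - k) v))"
      unfolding sum.distrib[symmetric] by (intro sum.cong refl) (auto simp: of_nat_diff algebra_simps)
    then show ?thesis
      by (simp add: hit_prob_add_level sum_distrib_left)
  qed
  ultimately show ?thesis
    using sums_reach_moment[of "u + v"] sums_unique2 by auto
qed

lemma reach_prob_power: "reach_prob r \<theta> u = reach_prob r \<theta> 1 ^ u"
proof (induction u)
  case (Suc u)
  then show ?case
    using reach_prob_add[of 1 u] by simp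
qed (simp add: reach_prob_0)

lemma reach_prob_1_fixed_point: "reach_prob r \<theta> 1 = (1 - \<theta>) + \<theta> * reach_prob r \<theta> (1 + r)"
proof -
  have "(\<lambda>n. hit_prob r \<theta> (Suc n) 1) sums ((1 - \<theta>) * reach_prob r \<theta> 0 + \<theta> * reach_prob r \<theta> (1 + r))"
    using sums_add[OF sums_mult[OF sums_reach_prob] sums_mult[OF sums_reach_prob]] by simp
  moreover have "(\<lambda>n. hit_prob r \<theta> (Suc n) 1) sums reach_prob r \<theta> 1"
    using sums_Suc_iff[of "\<lambda>n. hit_prob r \<theta> n 1"] sums_reach_prob[of 1] by simp
  ultimately show ?thesis
    using sums_unique2 reach_prob_0 by force
qed

text \<open>\<open>\<rho>\<close> is the only fixed point in \<open>[0, \<rho>]\<close>, since the fixed-point map has slope below one there.\<close>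
lemma reach_prob_1: "reach_prob r \<theta> 1 = \<rho>"
proof (rule ccontr)
  let ?a = "reach_prob r \<theta> 1"
  assume "?a \<noteq> \<rho>"
  then have "?a < \<rho>"
    using reach_prob_le[of 1] by simp
  have "?a = (1 - \<theta>) + \<theta> * ?a ^ (r + 1)"
    using reach_prob_1_fixed_point reach_prob_power[of "1 + r"] by simp
  then have "\<rho> - ?a = \<theta> * (\<rho> ^ (r + 1) - ?a ^ (r + 1))"
    using fixed_point by (simp add: algebra_simps)
  also have "\<dots> \<le> \<theta> * (real (r + 1) * \<rho> ^ r * (\<rho> - ?a))"
    using power_diff_le[OF reach_prob_nonneg less_imp_le[OF \<open>?a < \<rho>\<close>], of "r + 1"] theta_pos
    by (intro mult_left_mono) auto
  also have "\<dots> = (\<theta> * (real r + 1) * \<rho> ^ r) * (\<rho> - ?a)"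
    by (simp add: algebra_simps)
  also have "\<dots> < \<rho> - ?a"
    using fixed_point_derivative_lt_1 \<open>?a < \<rho>\<close> by simp
  finally show False
    by simp
qed

lemma reach_prob_eq: "reach_prob r \<theta> u = \<rho> ^ u"
  unfolding reach_prob_power[of u] reach_prob_1 ..

lemma reach_moment_1_fixed_point: "reach_moment r \<theta> 1 = reach_prob r \<theta> 1 + \<theta> * reach_moment r \<theta> (1 + r)"
proof -
  have "(\<lambda>n. real (Suc n) * hit_prob r \<theta> (Suc n) 1) sums reach_moment r \<theta> 1"
    using sums_Suc_iff[of "\<lambda>n. real n * hit_prob r \<theta> n 1"] sums_reach_moment[of 1]
    by (simp del: of_nat_Suc)
  moreover have "(\<lambda>n. real (Suc n) * hit_prob r \<theta> (Suc n) 1) sums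
      ((1 - \<theta>) * reach_prob r \<theta> 0 + \<theta> * (reach_moment r \<theta> (1 + r) + reach_prob r \<theta> (1 + r)))"
  proof -
    have "(\<lambda>n. real (Suc n) * hit_prob r \<theta> n 0) = (\<lambda>n. hit_prob r \<theta> n 0)"
      by (simp add: fun_eq_iff hit_prob_level_0)
    then have level_0: "(\<lambda>n. real (Suc n) * hit_prob r \<theta> n 0) sums reach_prob r \<theta> 0"
      using sums_reach_prob[of 0] by simp
    have "(\<lambda>n. real (Suc n) * hit_prob r \<theta> (Suc n) 1) = (\<lambda>n. (1 - \<theta>) * (real (Suc n) * hit_prob r \<theta> n 0)
        + \<theta> * (real n * hit_prob r \<theta> n (1 + r) + hit_prob r \<theta> n (1 + r)))"
      by (simp add: fun_eq_iff algebra_simps)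
    then show ?thesis
      using sums_add[OF sums_mult[OF level_0] sums_mult[OF sums_add[OF sums_reach_moment sums_reach_prob]]]
      by simp
  qed
  ultimately have "reach_moment r \<theta> 1 =
      (1 - \<theta>) * reach_prob r \<theta> 0 + \<theta> * (reach_moment r \<theta> (1 + r) + reach_prob r \<theta> (1 + r))"
    by (rule sums_unique2)
  then show ?thesis
    using reach_prob_1_fixed_point reach_prob_0 by (simp add: algebra_simps)
qed

lemma reach_moment_Suc: "reach_moment r \<theta> (Suc k) = real (Suc k) * \<rho> ^ k * reach_moment r \<theta> 1"
proof (induction k)
  case (Suc k)
  then show ?case
    using reach_moment_add[of "Suc k" 1] by (simp add: reach_prob_eq algebra_simps)
qed simp

lemma reach_moment_1: "reach_moment r \<theta> 1 = \<rho> / (1 - \<theta> * (real r + 1) * \<rho> ^ r)"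
proof -
  have "reach_moment r \<theta> 1 * (1 - \<theta> * (real r + 1) * \<rho> ^ r) = \<rho>"
    using reach_moment_1_fixed_point reach_moment_Suc[of r] reach_prob_eq[of 1]
    by (simp add: algebra_simps)
  then show ?thesis
    using fixed_point_derivative_lt_1 by (simp add: eq_divide_eq)
qed

lemma reach_moment_eq: "reach_moment r \<theta> u = real u * \<rho> ^ u / (1 - \<theta> * (real r + 1) * \<rho> ^ r)"
proof (cases u)
  case (Suc k)
  then show ?thesis
    using reach_moment_Suc[of k] reach_moment_1 by simp
qed (simp add: reach_moment_0)

lemma gen_fun_has_left_derivative:
  "(gen_fun r \<theta> has_real_derivative \<rho> / (1 - \<theta> * (real r + 1) * \<rho> ^ r)) (at_left 1)"
proof -
  have "(gen_fun r \<theta> has_real_derivative reach_moment r \<theta> 1) (at_left 1)"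
    unfolding reach_moment_def
    by (rule has_real_derivative_at_left_1_suminf)
      (simp_all add: hit_prob_nonneg[OF theta_bounds] summable_hit_moment
        gen_fun_eq_suminf[OF theta_bounds _ _ summable_hit_prob])
  then show ?thesis
    by (simp only: reach_moment_1)
qed

lemma cond_mean_hit_time:
  "cond_mean (bern_paths \<theta>) (hit_time 1 r (int u)) = real u / (1 - \<theta> * (real r + 1) * \<rho> ^ r)"
  using cond_mean_hit_time_eq_suminf[OF theta_bounds summable_hit_prob summable_hit_moment] rho_pos
  by (simp add: reach_moment_eq[unfolded reach_moment_def] reach_prob_eq[unfolded reach_prob_def])

lemma mean_denominator_eq: "(1 - \<theta>) * (real r + 1) - real r * \<rho> = \<rho> * (1 - \<theta> * (real r + 1) * \<rho> ^ r)"
proof -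
  have "\<rho> * (1 - \<theta> * (real r + 1) * \<rho> ^ r) = \<rho> - (real r + 1) * (\<theta> * \<rho> ^ (r + 1))"
    by (simp add: algebra_simps)
  also have "\<dots> = \<rho> - (real r + 1) * (\<rho> - (1 - \<theta>))"
    using fixed_point by simp
  also have "\<dots> = (1 - \<theta>) * (real r + 1) - real r * \<rho>"
    by (simp add: algebra_simps)
  finally show ?thesis ..
qed

end

section \<open>The trust model as a random walk\<close>

lemma trust_ok_iff:
  assumes "0 < \<alpha> + \<beta>"
  shows "trust_ok \<alpha> \<beta> c r S F \<longleftrightarrow>
    int c * int F - int r * int S < int r * int \<alpha> - int c * int \<beta> + 1"
proof -
  define D where "D = real \<alpha> + real \<beta> + real S + real F"
  have "0 < D"
    using assms of_nat_0_less_iff[of "\<alpha> + \<beta>", where 'a = real] unfolding D_def by simp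
  have theta_hat: "theta_hat \<alpha> \<beta> S F = (real \<alpha> + real S) / D"
    by (simp add: theta_hat_def D_def)
  have "1 - (real \<alpha> + real S) / D = (real \<beta> + real F) / D"
    using \<open>0 < D\<close> by (simp add: D_def field_simps)
  then have "real r * theta_hat \<alpha> \<beta> S F - real c * (1 - theta_hat \<alpha> \<beta> S F)
      = (real r * (real \<alpha> + real S) - real c * (real \<beta> + real F)) / D"
    by (simp add: theta_hat diff_divide_distrib)
  then have "trust_ok \<alpha> \<beta> c r S F \<longleftrightarrow> real c * (real \<beta> + real F) \<le> real r * (real \<alpha> + real S)"
    using \<open>0 < D\<close> by (simp add: trust_ok_def zero_le_divide_iff)
  also have "\<dots> \<longleftrightarrow> int c * (int \<beta> + int F) \<le> int r * (int \<alpha> + int S)"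
    by (simp only: of_int_le_iff[where 'a = real, symmetric]) simp
  finally show ?thesis
    by (auto simp: algebra_simps)
qed

lemma trust_state_tracks_walk:
  assumes "0 < \<alpha> + \<beta>" and below: "\<forall>k<t. walk c r \<omega> k < int r * int \<alpha> - int c * int \<beta> + 1"
  shows "int c * int (F_hat \<alpha> \<beta> c r \<omega> t) - int r * int (S_hat \<alpha> \<beta> c r \<omega> t) = walk c r \<omega> t
    \<and> (snd (snd (trust_state \<alpha> \<beta> c r \<omega> t)) \<longleftrightarrow> walk c r \<omega> t < int r * int \<alpha> - int c * int \<beta> + 1)"
  using below
proof (induction t)
  case 0
  then show ?case
    using trust_ok_iff[OF assms(1)] by (simp add: S_hat_def F_hat_def)
next
  case (Suc t)
  obtain S F ok where state: "trust_state \<alpha> \<beta> c r \<omega> t = (S, F, ok)"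
    by (cases "trust_state \<alpha> \<beta> c r \<omega> t") auto
  have walk_t: "int c * int F - int r * int S = walk c r \<omega> t" and ok
    using Suc state by (auto simp: S_hat_def F_hat_def)
  define S' where "S' = (if \<omega> !! t then Suc S else S)"
  define F' where "F' = (if \<omega> !! t then F else Suc F)"
  have state': "trust_state \<alpha> \<beta> c r \<omega> (Suc t) = (S', F', trust_ok \<alpha> \<beta> c r S' F')"
    using state \<open>ok\<close> by (simp add: S'_def F'_def Let_def)
  have "int c * int F' - int r * int S' = walk c r \<omega> (Suc t)"
    using walk_t by (cases "\<omega> !! t") (simp_all add: S'_def F'_def walk_Suc walk_step_def algebra_simps)
  then show ?case
    unfolding S_hat_def F_hat_def state' using trust_ok_iff[OF assms(1)] by simp
qed

lemma trust_tau_eq_hit_time: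
  assumes "0 < \<alpha> + \<beta>"
  shows "trust_tau \<alpha> \<beta> c r = hit_time c r (int r * int \<alpha> - int c * int \<beta> + 1)"
proof
  fix \<omega>
  let ?level = "int r * int \<alpha> - int c * int \<beta> + 1"
  have "trust_tau \<alpha> \<beta> c r \<omega> =
      first_time (\<lambda>t. \<not> trust_ok \<alpha> \<beta> c r (S_hat \<alpha> \<beta> c r \<omega> t) (F_hat \<alpha> \<beta> c r \<omega> t))"
    by (simp add: trust_tau_def first_time_def)
  also have "\<dots> = first_time (\<lambda>t. ?level \<le> walk c r \<omega> t)"
  proof (rule first_time_cong)
    fix n
    assume "\<forall>t<n. \<not> ?level \<le> walk c r \<omega> t"
    then have "int c * int (F_hat \<alpha> \<beta> c r \<omega> n) - int r * int (S_hat \<alpha> \<beta> c r \<omega> n) = walk c r \<omega> n"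
      using trust_state_tracks_walk[OF assms, of n] by (simp add: not_le)
    then show "\<not> trust_ok \<alpha> \<beta> c r (S_hat \<alpha> \<beta> c r \<omega> n) (F_hat \<alpha> \<beta> c r \<omega> n) \<longleftrightarrow> ?level \<le> walk c r \<omega> n"
      by (auto simp: trust_ok_iff[OF assms])
  qed
  also have "\<dots> = hit_time c r ?level \<omega>"
    by (simp add: hit_time_eq_first_time)
  finally show "trust_tau \<alpha> \<beta> c r \<omega> = hit_time c r ?level \<omega>" .
qed

theorem lemma3p4:
  fixes r u \<alpha> \<beta> :: nat and \<theta> \<rho> :: real
  assumes "0 < r"
    and "1 / (real r + 1) < \<theta>" and "\<theta> < 1"
    and "0 \<le> \<rho>" and "\<rho> < 1"
    and "\<rho> = (1 - \<theta>) + \<theta> * \<rho> ^ (r + 1)"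
    and "0 < \<alpha> + \<beta>"
  shows "(\<exists>D. (gen_fun r \<theta> has_real_derivative D) (at_left 1)
            \<and> cond_mean (bern_paths \<theta>) (hit_time 1 r (int u)) = real u * D / \<rho>
            \<and> cond_mean (bern_paths \<theta>) (hit_time 1 r (int u))
                = real u * \<rho> / ((1 - \<theta>) * (real r + 1) - real r * \<rho>))
       \<and> q \<alpha> \<beta> 1 r \<theta>
           = cond_mean (bern_paths \<theta>) (hit_time 1 r (int r * int \<alpha> - int \<beta> + 1))"
proof -
  note root = assms(3-6)
  define D where "D = \<rho> / (1 - \<theta> * (real r + 1) * \<rho> ^ r)"
  have "(gen_fun r \<theta> has_real_derivative D) (at_left 1)"
    unfolding D_def by (rule gen_fun_has_left_derivative[OF root])
  moreover have "cond_mean (bern_paths \<theta>) (hit_time 1 r (int u)) = real u * D / \<rho>"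
    using cond_mean_hit_time[OF root] rho_pos[OF root] by (simp add: D_def)
  moreover have "cond_mean (bern_paths \<theta>) (hit_time 1 r (int u))
      = real u * \<rho> / ((1 - \<theta>) * (real r + 1) - real r * \<rho>)"
    using cond_mean_hit_time[OF root] mean_denominator_eq[OF root] rho_pos[OF root] by simp
  moreover have "q \<alpha> \<beta> 1 r \<theta> = cond_mean (bern_paths \<theta>) (hit_time 1 r (int r * int \<alpha> - int \<beta> + 1))"
    using trust_tau_eq_hit_time[OF assms(7), of 1 r] by (simp add: q_def)
  ultimately show ?thesis
    by blast
qed

end
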